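(* Every connected $\mathrm{NP}_2$-digital H-space $(X,e,\mu)$ has $X$ $\mathrm{NP}_2$-contractible.
   Context: A digital image is a finite set $X\subset\mathbb{Z}^n$ with a reflexive symmetric adjacency relation (a finite reflexive graph); continuous maps send adjacent points to adjacent points; connectedness is graph connectedness. On products, $\mathrm{NP}_2$ declares two tuples adjacent iff coordinates are adjacent in at most 2 positions and equal elsewhere. An $\mathrm{NP}_2$-homotopy from $f$ to $g:X\to Y$ is an $\mathrm{NP}_2$-continuous $H:X\times[0,m]_{\mathbb{Z}}\to Y$ with $H(\cdot,0)=f$, $H(\cdot,m)=g$; write $f\simeq_2 g$. $\mathrm{NP}_2$-contractible means $\mathrm{NP}_2$-homotopy equivalent to a single point. An $\mathrm{NP}_2$-digital H-space is $(X,e,\mu)$ with $\mu:X\times X\to X$ $\mathrm{NP}_2$-continuous, $\mu\circ(\mathrm{id}_X,c_e)\simeq_2\mathrm{id}_X$, $\mu\circ(c_e,\mathrm{id}_X)\simeq_2\mathrm{id}_X$, where $(f,g)(x)=(f(x),g(x))$ and $c_e$ is constant at $e$ (homotopies need not be pointed). *)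

theory Defs
  imports Main
begin

definition digital_image :: "'a set \<Rightarrow> ('a \<Rightarrow> 'a \<Rightarrow> bool) \<Rightarrow> bool" where
  "digital_image X adj \<longleftrightarrow> finite X \<and> (\<forall>x\<in>X. adj x x) \<and> (\<forall>x\<in>X. \<forall>y\<in>X. adj x y \<longrightarrow> adj y x)"

definition dcont :: "'a set \<Rightarrow> ('a \<Rightarrow> 'a \<Rightarrow> bool) \<Rightarrow> 'b set \<Rightarrow> ('b \<Rightarrow> 'b \<Rightarrow> bool) \<Rightarrow> ('a \<Rightarrow> 'b) \<Rightarrow> bool" where
  "dcont X a Y b f \<longleftrightarrow> f ` X \<subseteq> Y \<and> (\<forall>x\<in>X. \<forall>y\<in>X. a x y \<longrightarrow> b (f x) (f y))"

definition dconnected :: "'a set \<Rightarrow> ('a \<Rightarrow> 'a \<Rightarrow> bool) \<Rightarrow> bool" where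
  "dconnected X a \<longleftrightarrow> (\<forall>x\<in>X. \<forall>y\<in>X. (x, y) \<in> {(u, v). u \<in> X \<and> v \<in> X \<and> a u v}\<^sup>*)"

text \<open>NP_2 adjacency on a product of two factors: the tuples agree or are adjacent in at most
  two coordinates and are equal elsewhere; with two factors and reflexive adjacencies this says
  both coordinates are adjacent (or equal).\<close>
definition np2_adj :: "('a \<Rightarrow> 'a \<Rightarrow> bool) \<Rightarrow> ('b \<Rightarrow> 'b \<Rightarrow> bool) \<Rightarrow> 'a \<times> 'b \<Rightarrow> 'a \<times> 'b \<Rightarrow> bool" where
  "np2_adj a b p q \<longleftrightarrow> (a (fst p) (fst q) \<or> fst p = fst q) \<and> (b (snd p) (snd q) \<or> snd p = snd q)"

definition int_adj :: "int \<Rightarrow> int \<Rightarrow> bool" where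
  "int_adj i j \<longleftrightarrow> \<bar>i - j\<bar> \<le> 1"

definition np2_homotopic :: "'a set \<Rightarrow> ('a \<Rightarrow> 'a \<Rightarrow> bool) \<Rightarrow> 'b set \<Rightarrow> ('b \<Rightarrow> 'b \<Rightarrow> bool)
    \<Rightarrow> ('a \<Rightarrow> 'b) \<Rightarrow> ('a \<Rightarrow> 'b) \<Rightarrow> bool" where
  "np2_homotopic X a Y b f g \<longleftrightarrow>
     (\<exists>m::int. m \<ge> 0 \<and> (\<exists>H. dcont (X \<times> {0..m}) (np2_adj a int_adj) Y b H
        \<and> (\<forall>x\<in>X. H (x, 0) = f x \<and> H (x, m) = g x)))"

definition np2_htpy_equiv :: "'a set \<Rightarrow> ('a \<Rightarrow> 'a \<Rightarrow> bool) \<Rightarrow> 'b set \<Rightarrow> ('b \<Rightarrow> 'b \<Rightarrow> bool) \<Rightarrow> bool" where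
  "np2_htpy_equiv X a Y b \<longleftrightarrow>
     (\<exists>f g. dcont X a Y b f \<and> dcont Y b X a g
        \<and> np2_homotopic X a X a (g \<circ> f) id \<and> np2_homotopic Y b Y b (f \<circ> g) id)"

definition np2_contractible :: "'a set \<Rightarrow> ('a \<Rightarrow> 'a \<Rightarrow> bool) \<Rightarrow> bool" where
  "np2_contractible X a \<longleftrightarrow> np2_htpy_equiv X a {()} (\<lambda>_ _. True)"

definition np2_H_space :: "'a set \<Rightarrow> ('a \<Rightarrow> 'a \<Rightarrow> bool) \<Rightarrow> 'a \<Rightarrow> ('a \<times> 'a \<Rightarrow> 'a) \<Rightarrow> bool" where
  "np2_H_space X a e \<mu> \<longleftrightarrow> digital_image X a \<and> e \<in> X
     \<and> dcont (X \<times> X) (np2_adj a a) X a \<mu>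
     \<and> np2_homotopic X a X a (\<lambda>x. \<mu> (x, e)) id
     \<and> np2_homotopic X a X a (\<lambda>x. \<mu> (e, x)) id"

end

(*
  Folding dominated points (points whose neighbourhood lies in that of another point) yields
  an idempotent self-map r of X, homotopic to the identity, whose image Y has no dominated
  points. On such a Y every self-map homotopic to the identity is the identity: a homotopy
  starting at the identity can only move a point to a point dominating it. For p in X the maps
  y \<mapsto> r (\<mu> (y, p)) on Y are homotopic to each other along paths in the connected X, and
  for p = e to the identity of Y, so r (\<mu> (y, p)) = y; symmetrically r (\<mu> (p, y)) = y.
  Taking y, p in Y shows that Y is a single point, so the identity of X is homotopic to a
  constant map.
*)
theory Submission
  imports Defs
begin

lemma dcont_compose:
  "dcont X a Y b f \<Longrightarrow> dcont Y b Z c g \<Longrightarrow> dcont X a Z c (g \<circ> f)"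
  unfolding dcont_def image_subset_iff by simp

lemma dcont_subset: "dcont X a Y b f \<Longrightarrow> X' \<subseteq> X \<Longrightarrow> dcont X' a Y b f"
  unfolding dcont_def by blast

lemma dcont_image: "dcont X a Y b f \<Longrightarrow> dcont X a (f ` X) b f"
  unfolding dcont_def by auto

lemma dcont_subset_codomain: "dcont X a Y b f \<Longrightarrow> Y \<subseteq> Y' \<Longrightarrow> dcont X a Y' b f"
  unfolding dcont_def by auto

lemma dcont_np2_map_prod:
  assumes "dcont A a A' a' f" "dcont B b B' b' g"
  shows "dcont (A \<times> B) (np2_adj a b) (A' \<times> B') (np2_adj a' b') (map_prod f g)"
  using assms unfolding dcont_def np2_adj_def by auto

lemma dcont_np2_swap:
  "dcont (A \<times> B) (np2_adj a b) Z c G \<Longrightarrow> dcont (B \<times> A) (np2_adj b a) Z c (G \<circ> prod.swap)"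
  unfolding dcont_def np2_adj_def by auto

lemma np2_homotopic_cong:
  assumes "np2_homotopic X a Y b f g" "\<And>x. x \<in> X \<Longrightarrow> f x = f' x" "\<And>x. x \<in> X \<Longrightarrow> g x = g' x"
  shows "np2_homotopic X a Y b f' g'"
  using assms unfolding np2_homotopic_def by metis

lemma np2_homotopic_subset_codomain:
  "np2_homotopic X a Y b f g \<Longrightarrow> Y \<subseteq> Y' \<Longrightarrow> np2_homotopic X a Y' b f g"
  unfolding np2_homotopic_def using dcont_subset_codomain by metis

lemma np2_homotopic_refl:
  assumes "dcont X a Y b f" "reflp_on Y b"
  shows "np2_homotopic X a Y b f f"
  unfolding np2_homotopic_def
proof (intro exI[of _ 0] exI[of _ "f \<circ> fst"] conjI)
  show "dcont (X \<times> {0..0}) (np2_adj a int_adj) Y b (f \<circ> fst)"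
    using assms unfolding dcont_def np2_adj_def reflp_on_def by fastforce
qed auto

lemma np2_homotopic_sym:
  assumes "np2_homotopic X a Y b f g"
  shows "np2_homotopic X a Y b g f"
proof -
  obtain m H where m: "m \<ge> 0" and H: "dcont (X \<times> {0..m}) (np2_adj a int_adj) Y b H"
    and ends: "\<forall>x\<in>X. H (x, 0) = f x \<and> H (x, m) = g x"
    using assms unfolding np2_homotopic_def by blast
  have "dcont (X \<times> {0..m}) (np2_adj a int_adj) (X \<times> {0..m}) (np2_adj a int_adj)
      (map_prod id ((-) m))"
    unfolding dcont_def np2_adj_def int_adj_def by (auto simp: abs_minus_commute)
  then have "dcont (X \<times> {0..m}) (np2_adj a int_adj) Y b (H \<circ> map_prod id ((-) m))"
    using H by (rule dcont_compose)
  then show ?thesis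
    unfolding np2_homotopic_def using m ends by (intro exI[of _ m] exI conjI) auto
qed

lemma np2_homotopic_trans:
  assumes "np2_homotopic X a Y b f g" "np2_homotopic X a Y b g h"
  shows "np2_homotopic X a Y b f h"
proof -
  obtain m1 H1 where m1: "m1 \<ge> 0" and H1: "dcont (X \<times> {0..m1}) (np2_adj a int_adj) Y b H1"
    and e1: "\<forall>x\<in>X. H1 (x, 0) = f x \<and> H1 (x, m1) = g x"
    using assms(1) unfolding np2_homotopic_def by blast
  obtain m2 H2 where m2: "m2 \<ge> 0" and H2: "dcont (X \<times> {0..m2}) (np2_adj a int_adj) Y b H2"
    and e2: "\<forall>x\<in>X. H2 (x, 0) = g x \<and> H2 (x, m2) = h x"
    using assms(2) unfolding np2_homotopic_def by blast
  define H where "H p = (if snd p \<le> m1 then H1 p else H2 (fst p, snd p - m1))" for p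
  have adj: "b (H (x, t)) (H (x', t'))"
    if "x \<in> X" "x' \<in> X" "t \<in> {0..m1 + m2}" "t' \<in> {0..m1 + m2}" "a x x' \<or> x = x'"
      and step: "\<bar>t - t'\<bar> \<le> 1"
    for x x' t t'
  proof -
    have adj2: "b (H2 (x, s)) (H2 (x', s'))"
      if "s \<in> {0..m2}" "s' \<in> {0..m2}" "\<bar>s - s'\<bar> \<le> 1" for s s'
      using H2 that \<open>x \<in> X\<close> \<open>x' \<in> X\<close> \<open>a x x' \<or> x = x'\<close>
      unfolding dcont_def np2_adj_def int_adj_def by auto
    consider "t \<le> m1" "t' \<le> m1" | "t > m1" "t' > m1" | "{t, t'} = {m1, m1 + 1}"
      using step by fastforce
    then show ?thesis
    proof cases
      case 1
      then show ?thesis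
        using H1 that unfolding H_def dcont_def np2_adj_def int_adj_def by auto
    next
      case 2
      then show ?thesis
        using adj2[of "t - m1" "t' - m1"] that unfolding H_def by auto
    next
      case 3
      then show ?thesis
        using adj2[of 0 1] adj2[of 1 0] that m2 e1 e2 unfolding H_def
        by (auto simp: doubleton_eq_iff)
    qed
  qed
  have "dcont (X \<times> {0..m1 + m2}) (np2_adj a int_adj) Y b H"
    unfolding dcont_def
  proof (intro conjI ballI impI subsetI)
    show "y \<in> Y" if "y \<in> H ` (X \<times> {0..m1 + m2})" for y
      using that H1 H2 unfolding H_def dcont_def by (force simp: not_le)
    show "b (H p) (H q)" if "p \<in> X \<times> {0..m1 + m2}" "q \<in> X \<times> {0..m1 + m2}" "np2_adj a int_adj p q"
      for p q
      using that adj unfolding np2_adj_def int_adj_def by (cases p, cases q) auto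
  qed
  moreover have "\<forall>x\<in>X. H (x, 0) = f x \<and> H (x, m1 + m2) = h x"
    using e1 e2 m1 m2 unfolding H_def by (auto simp: le_less)
  ultimately show ?thesis
    unfolding np2_homotopic_def using m1 m2 by (intro exI[of _ "m1 + m2"]) auto
qed

lemma np2_homotopic_compose_left:
  assumes "np2_homotopic X a Y b f g" "dcont Y b Z c h"
  shows "np2_homotopic X a Z c (h \<circ> f) (h \<circ> g)"
proof -
  obtain m H where m: "m \<ge> 0" and H: "dcont (X \<times> {0..m}) (np2_adj a int_adj) Y b H"
    and ends: "\<forall>x\<in>X. H (x, 0) = f x \<and> H (x, m) = g x"
    using assms(1) unfolding np2_homotopic_def by blast
  have "dcont (X \<times> {0..m}) (np2_adj a int_adj) Z c (h \<circ> H)"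
    using H assms(2) by (rule dcont_compose)
  moreover have "\<forall>x\<in>X. (h \<circ> H) (x, 0) = (h \<circ> f) x \<and> (h \<circ> H) (x, m) = (h \<circ> g) x"
    using ends by simp
  ultimately show ?thesis
    unfolding np2_homotopic_def using m by blast
qed

lemma np2_homotopic_compose_right:
  assumes "dcont W d X a k" "np2_homotopic X a Y b f g"
  shows "np2_homotopic W d Y b (f \<circ> k) (g \<circ> k)"
proof -
  obtain m H where m: "m \<ge> 0" and H: "dcont (X \<times> {0..m}) (np2_adj a int_adj) Y b H"
    and ends: "\<forall>x\<in>X. H (x, 0) = f x \<and> H (x, m) = g x"
    using assms(2) unfolding np2_homotopic_def by blast
  have "dcont {0..m} int_adj {0..m} int_adj id"
    unfolding dcont_def by auto
  then have "dcont (W \<times> {0..m}) (np2_adj d int_adj) Y b (H \<circ> map_prod k id)"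
    using dcont_np2_map_prod[OF assms(1)] H by (blast intro: dcont_compose)
  moreover have
    "\<forall>w\<in>W. (H \<circ> map_prod k id) (w, 0) = (f \<circ> k) w \<and> (H \<circ> map_prod k id) (w, m) = (g \<circ> k) w"
    using ends assms(1) unfolding dcont_def by auto
  ultimately show ?thesis
    unfolding np2_homotopic_def using m by blast
qed

lemma np2_homotopic_subset:
  assumes "np2_homotopic X a Y b f g" "X' \<subseteq> X"
  shows "np2_homotopic X' a Y b f g"
proof -
  have "dcont X' a X a id"
    using assms(2) unfolding dcont_def by auto
  then show ?thesis
    using assms(1) by (metis np2_homotopic_compose_right comp_id)
qed

lemma np2_homotopic_one_step:
  assumes "f ` X \<subseteq> Y" "g ` X \<subseteq> Y"
    and "\<And>x x' h h'. x \<in> X \<Longrightarrow> x' \<in> X \<Longrightarrow> a x x' \<or> x = x' \<Longrightarrow> h \<in> {f, g} \<Longrightarrow> h' \<in> {f, g}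
      \<Longrightarrow> b (h x) (h' x')"
  shows "np2_homotopic X a Y b f g"
proof -
  define H where "H p = (if snd p = 0 then f (fst p) else g (fst p))" for p :: "_ \<times> int"
  have "dcont (X \<times> {0..1}) (np2_adj a int_adj) Y b H"
    using assms unfolding dcont_def np2_adj_def H_def by auto
  then show ?thesis
    unfolding np2_homotopic_def H_def by (intro exI[of _ 1] exI conjI) auto
qed

lemma np2_homotopic_slices:
  assumes G: "dcont (Y \<times> P) (np2_adj b a) Z c G" and "reflp_on Z c" "symp_on P a" "dconnected P a"
    and "p \<in> P" "q \<in> P"
  shows "np2_homotopic Y b Z c (\<lambda>y. G (y, p)) (\<lambda>y. G (y, q))"
proof -
  have slice: "dcont Y b Z c (\<lambda>y. G (y, s))" if "s \<in> P" for s
    using G that unfolding dcont_def np2_adj_def by auto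
  have adjacent_slices: "np2_homotopic Y b Z c (\<lambda>y. G (y, s)) (\<lambda>y. G (y, s'))"
    if "s \<in> P" "s' \<in> P" "a s s'" for s s'
  proof (rule np2_homotopic_one_step)
    show "(\<lambda>y. G (y, s)) ` Y \<subseteq> Z" "(\<lambda>y. G (y, s')) ` Y \<subseteq> Z"
      using slice that unfolding dcont_def by auto
    have "a s' s"
      using that \<open>symp_on P a\<close> by (blast dest: symp_onD)
    then show "c (h y) (h' y')"
      if "y \<in> Y" "y' \<in> Y" "b y y' \<or> y = y'"
        "h \<in> {\<lambda>y. G (y, s), \<lambda>y. G (y, s')}" "h' \<in> {\<lambda>y. G (y, s), \<lambda>y. G (y, s')}" for y y' h h'
      using that G \<open>s \<in> P\<close> \<open>s' \<in> P\<close> \<open>a s s'\<close> unfolding dcont_def np2_adj_def by auto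
  qed
  have "(p, q) \<in> {(u, v). u \<in> P \<and> v \<in> P \<and> a u v}\<^sup>*"
    using \<open>dconnected P a\<close> \<open>p \<in> P\<close> \<open>q \<in> P\<close> unfolding dconnected_def by blast
  then show ?thesis
  proof (induction rule: rtrancl_induct)
    case base
    show ?case
      using slice[OF \<open>p \<in> P\<close>] \<open>reflp_on Z c\<close> by (rule np2_homotopic_refl)
  next
    case (step s s')
    then have "np2_homotopic Y b Z c (\<lambda>y. G (y, s)) (\<lambda>y. G (y, s'))"
      using adjacent_slices by blast
    with step.IH show ?case
      by (rule np2_homotopic_trans)
  qed
qed

definition stiff :: "'a set \<Rightarrow> ('a \<Rightarrow> 'a \<Rightarrow> bool) \<Rightarrow> bool" where
  "stiff Y a \<longleftrightarrow> (\<forall>y\<in>Y. \<forall>w\<in>Y. (\<forall>z\<in>Y. a y z \<longrightarrow> a w z) \<longrightarrow> w = y)"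

lemma stiff_homotopic_id_eq_id:
  assumes "stiff Y a" "np2_homotopic Y a Y a id g" "y \<in> Y"
  shows "g y = y"
proof -
  obtain m H where "m \<ge> 0" and H: "dcont (Y \<times> {0..m}) (np2_adj a int_adj) Y a H"
    and ends: "\<forall>y\<in>Y. H (y, 0) = y \<and> H (y, m) = g y"
    using assms(2) unfolding np2_homotopic_def by auto
  have "\<forall>y\<in>Y. H (y, int n) = y" if "int n \<le> m" for n
    using that
  proof (induction n)
    case 0
    then show ?case using ends by simp
  next
    case (Suc n)
    show ?case
    proof
      fix y assume "y \<in> Y"
      have "a (H (y, int (Suc n))) z" if "z \<in> Y" "a y z" for z
      proof -
        have "np2_adj a int_adj (y, int (Suc n)) (z, int n)"
          using that unfolding np2_adj_def int_adj_def by simp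
        then have "a (H (y, int (Suc n))) (H (z, int n))"
          using H \<open>y \<in> Y\<close> \<open>z \<in> Y\<close> Suc.prems unfolding dcont_def by auto
        then show ?thesis
          using Suc \<open>z \<in> Y\<close> by simp
      qed
      moreover have "H (y, int (Suc n)) \<in> Y"
        using H \<open>y \<in> Y\<close> Suc.prems unfolding dcont_def by auto
      ultimately show "H (y, int (Suc n)) = y"
        using assms(1) \<open>y \<in> Y\<close> unfolding stiff_def by blast
    qed
  qed
  moreover obtain n where "m = int n"
    using \<open>m \<ge> 0\<close> nonneg_int_cases by blast
  ultimately show ?thesis
    using ends assms(3) by auto
qed

lemma fold_dominated_homotopic_id:
  assumes refl: "reflp_on Y a" and sym: "symp_on Y a" and "y \<in> Y" "w \<in> Y"
    and dom: "\<forall>z\<in>Y. a y z \<longrightarrow> a w z"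
  shows "dcont Y a Y a (id(y := w))" "np2_homotopic Y a Y a (id(y := w)) id"
proof -
  have dom_w: "a w z" if "z \<in> Y" "a y z \<or> y = z" for z
    using that dom reflp_onD[OF refl \<open>y \<in> Y\<close>] by auto
  have w_dom: "a z w" if "z \<in> Y" "a z y \<or> z = y" for z
    using that dom_w symp_onD[OF sym] \<open>y \<in> Y\<close> \<open>w \<in> Y\<close> by blast
  have adj: "a (h z) (h' z')"
    if "z \<in> Y" "z' \<in> Y" "a z z' \<or> z = z'" "h \<in> {id(y := w), id}" "h' \<in> {id(y := w), id}"
    for z z' h h'
  proof -
    have "h z = z \<or> z = y \<and> h z = w" "h' z' = z' \<or> z' = y \<and> h' z' = w"
      using that(4,5) by (auto split: if_split_asm)
    then show ?thesis
      using that(1-3) dom_w[of z'] w_dom[of z] reflp_onD[OF refl] \<open>w \<in> Y\<close>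
      by auto
  qed
  have into: "id(y := w) ` Y \<subseteq> Y"
    using \<open>w \<in> Y\<close> by auto
  show "dcont Y a Y a (id(y := w))"
    unfolding dcont_def using into adj by blast
  show "np2_homotopic Y a Y a (id(y := w)) id"
    using into adj by (intro np2_homotopic_one_step) auto
qed

lemma exists_stiff_retract_homotopic_id:
  assumes "finite X" "reflp_on X a" "symp_on X a"
  obtains r where "dcont X a X a r" "\<forall>x\<in>X. r (r x) = r x" "np2_homotopic X a X a r id"
    "stiff (r ` X) a"
proof -
  define retract where
    "retract r \<longleftrightarrow> dcont X a X a r \<and> (\<forall>x\<in>X. r (r x) = r x) \<and> np2_homotopic X a X a r id" for r
  have "dcont X a X a id"
    unfolding dcont_def by simp
  then have "retract id"
    unfolding retract_def using np2_homotopic_refl[OF _ assms(2)] by simp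
  then obtain r where "retract r" and min: "\<And>r'. retract r' \<Longrightarrow> card (r ` X) \<le> card (r' ` X)"
    using ex_has_least_nat[of retract id "\<lambda>r. card (r ` X)"] by blast
  then have r: "dcont X a X a r" and idem: "\<forall>x\<in>X. r (r x) = r x"
    and htpy: "np2_homotopic X a X a r id"
    unfolding retract_def by auto
  have YX: "r ` X \<subseteq> X"
    using r unfolding dcont_def by auto
  have rY: "dcont X a (r ` X) a r"
    using r by (rule dcont_image)
  have "stiff (r ` X) a"
    unfolding stiff_def
  proof (intro ballI impI, rule ccontr)
    fix y w
    assume y: "y \<in> r ` X" and w: "w \<in> r ` X" and dom: "\<forall>z\<in>r ` X. a y z \<longrightarrow> a w z" and "w \<noteq> y"
    note fold = fold_dominated_homotopic_id[OF reflp_on_subset[OF assms(2) YX]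
        symp_on_subset[OF assms(3) YX] y w dom]
    let ?r' = "id(y := w) \<circ> r"
    have "retract ?r'"
      unfolding retract_def
    proof (intro conjI)
      show "dcont X a X a ?r'"
        using dcont_compose[OF rY fold(1)] YX by (rule dcont_subset_codomain)
      show "\<forall>x\<in>X. ?r' (?r' x) = ?r' x"
      proof
        fix x assume "x \<in> X"
        then have "r (?r' x) = ?r' x"
          using idem w by auto
        then show "?r' (?r' x) = ?r' x"
          using \<open>w \<noteq> y\<close> by simp
      qed
      have "np2_homotopic X a (r ` X) a ?r' (id \<circ> r)"
        using rY fold(2) by (rule np2_homotopic_compose_right)
      then have "np2_homotopic X a X a ?r' r"
        using YX by (auto dest: np2_homotopic_subset_codomain)
      then show "np2_homotopic X a X a ?r' id"
        using htpy by (rule np2_homotopic_trans)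
    qed
    have "?r' ` X \<subseteq> r ` X - {y}"
      using w \<open>w \<noteq> y\<close> by auto
    then have "card (?r' ` X) < card (r ` X)"
      using assms(1) y by (meson card_Diff1_less card_mono finite_Diff finite_imageI le_less_trans)
    with min[OF \<open>retract ?r'\<close>] show False
      by simp
  qed
  then show thesis
    using that r idem htpy by blast
qed

lemma stiff_retract_fixes_unital_slices:
  assumes refl: "reflp_on X a" and sym: "symp_on X a" and conn: "dconnected X a"
    and r: "dcont X a X a r" "\<forall>x\<in>X. r (r x) = r x" "stiff (r ` X) a"
    and G: "dcont (X \<times> X) (np2_adj a a) X a G"
    and unit: "np2_homotopic X a X a (\<lambda>x. G (x, e)) id" "e \<in> X"
    and "y \<in> r ` X" "p \<in> X"
  shows "r (G (y, p)) = y"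
proof -
  have YX: "r ` X \<subseteq> X"
    using r(1) unfolding dcont_def by simp
  have rY: "dcont X a (r ` X) a r"
    using r(1) by (rule dcont_image)
  have "np2_homotopic X a (r ` X) a (r \<circ> (\<lambda>x. G (x, e))) (r \<circ> id)"
    using unit(1) rY by (rule np2_homotopic_compose_left)
  then have "np2_homotopic (r ` X) a (r ` X) a (r \<circ> (\<lambda>x. G (x, e))) (r \<circ> id)"
    using YX by (rule np2_homotopic_subset)
  then have unit_Y: "np2_homotopic (r ` X) a (r ` X) a (\<lambda>y. r (G (y, e))) id"
    by (rule np2_homotopic_cong) (use r(2) in auto)
  have rG: "dcont (r ` X \<times> X) (np2_adj a a) (r ` X) a (r \<circ> G)"
    using dcont_compose[OF G rY] by (rule dcont_subset) (use YX in auto)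
  have "np2_homotopic (r ` X) a (r ` X) a (\<lambda>y. r (G (y, e))) (\<lambda>y. r (G (y, p)))"
    using np2_homotopic_slices[OF rG reflp_on_subset[OF refl YX] sym conn unit(2) \<open>p \<in> X\<close>] by simp
  with unit_Y have "np2_homotopic (r ` X) a (r ` X) a id (\<lambda>y. r (G (y, p)))"
    by (blast intro: np2_homotopic_trans np2_homotopic_sym)
  then show ?thesis
    using stiff_homotopic_id_eq_id r(3) \<open>y \<in> r ` X\<close> by fastforce
qed

lemma np2_contractible_if_id_homotopic_const:
  assumes "np2_homotopic X a X a (\<lambda>_. c) id" "c \<in> X" "reflp_on X a"
  shows "np2_contractible X a"
proof -
  have "dcont X a {()} (\<lambda>_ _. True) (\<lambda>_. ())" "dcont {()} (\<lambda>_ _. True) X a (\<lambda>_. c)"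
    using assms(2,3) unfolding dcont_def reflp_on_def by auto
  moreover have "np2_homotopic X a X a ((\<lambda>_. c) \<circ> (\<lambda>_. ())) id"
    using assms(1) by (simp add: comp_def)
  moreover have "(\<lambda>_. ()) \<circ> (\<lambda>_. c) = (id :: unit \<Rightarrow> unit)"
    by (rule ext) simp
  moreover have "np2_homotopic {()} (\<lambda>_ _. True) {()} (\<lambda>_ _. True) id id"
    by (rule np2_homotopic_refl) (auto simp: dcont_def reflp_on_def)
  ultimately show ?thesis
    unfolding np2_contractible_def np2_htpy_equiv_def by metis
qed

theorem mainTheorem13:
  fixes X :: "'a set" and adj :: "'a \<Rightarrow> 'a \<Rightarrow> bool" and e :: 'a and \<mu> :: "'a \<times> 'a \<Rightarrow> 'a"
  assumes "np2_H_space X adj e \<mu>"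
    and "dconnected X adj"
  shows "np2_contractible X adj"
proof -
  have X: "finite X" "reflp_on X adj" "symp_on X adj" and "e \<in> X"
    and \<mu>: "dcont (X \<times> X) (np2_adj adj adj) X adj \<mu>"
    and right_unit: "np2_homotopic X adj X adj (\<lambda>x. \<mu> (x, e)) id"
    and left_unit: "np2_homotopic X adj X adj (\<lambda>x. \<mu> (e, x)) id"
    using assms(1) unfolding np2_H_space_def digital_image_def reflp_on_def symp_on_def by auto
  obtain r where r: "dcont X adj X adj r" "\<forall>x\<in>X. r (r x) = r x" "np2_homotopic X adj X adj r id"
    "stiff (r ` X) adj"
    using exists_stiff_retract_homotopic_id[OF X] by blast
  have "r e \<in> X"
    using r(1) \<open>e \<in> X\<close> unfolding dcont_def by auto
  have left_unit': "np2_homotopic X adj X adj (\<lambda>x. (\<mu> \<circ> prod.swap) (x, e)) id"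
    using left_unit by simp
  note fixes_slices = stiff_retract_fixes_unital_slices[OF X(2,3) assms(2) r(1,2,4)]
  have "r x = r e" if "x \<in> X" for x
  proof -
    have "r (\<mu> (r x, r e)) = r x"
      using fixes_slices[OF \<mu> right_unit \<open>e \<in> X\<close>] \<open>x \<in> X\<close> \<open>r e \<in> X\<close> by blast
    moreover have "r (\<mu> (r x, r e)) = r e"
      using fixes_slices[OF dcont_np2_swap[OF \<mu>] left_unit' \<open>e \<in> X\<close>, of "r e" "r x"]
        \<open>x \<in> X\<close> \<open>e \<in> X\<close> r(1) unfolding dcont_def by auto
    ultimately show ?thesis
      by simp
  qed
  with r(3) have "np2_homotopic X adj X adj (\<lambda>_. r e) id"
    by (rule np2_homotopic_cong) auto
  then show ?thesis
    using \<open>r e \<in> X\<close> X(2) by (rule np2_contractible_if_id_homotopic_const)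
qed

end
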